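(* Let $\Omega$ be a finite set, $(H_i\mid i\in\Omega)$ finite abelian groups with $h_i=|H_i|\geqslant2$ for all $i$, $\mathbf{H}=\prod_{i\in\Omega}H_i$, $\mathbf{P}=(\Omega,\preccurlyeq_{\mathbf{P}})$ a poset. Let $\alpha\in\hat{\mathbf{H}}$ with $\langle\mathrm{supp}(\alpha)\rangle_{\overline{\mathbf{P}}}=D$, and let $X=(\Omega-D)\cup\min_{\mathbf{P}}(D)$. Then $\deg(F(\alpha))=|X|=|\Omega|-|D|+|\min_{\mathbf{P}}(D)|$, and the leading coefficient of $F(\alpha)$ equals $$(-1)^{|\min_{\mathbf{P}}(D)|}\Big(\prod_{i\in X-\max_{\mathbf{P}}(X)}h_i\Big)\Big(\prod_{i\in\max_{\mathbf{P}}(X)-\min_{\mathbf{P}}(D)}(h_i-1)\Big).$$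
   Context: $\hat{\mathbf{H}}$ is the character group of $\mathbf{H}$, identified with $\prod_i\hat{H_i}$ via $\alpha(\beta)=\prod_i\alpha_{(i)}(\beta_{(i)})$; $\mathrm{supp}$ of a codeword is the set of coordinates where it is not the identity. $\max_{\mathbf{P}}(B)$, $\min_{\mathbf{P}}(B)$ are the maximal, minimal elements of $B$. For a poset $\mathbf{Q}$ on $\Omega$, $\langle B\rangle_{\mathbf{Q}}$ is the down-closure of $B$ in $\mathbf{Q}$ and $\mathrm{wt}_{\mathbf{Q}}(\beta)=|\langle\mathrm{supp}(\beta)\rangle_{\mathbf{Q}}|$. $\overline{\mathbf{P}}$ is the dual poset. With $n=|\Omega|$, $F(\alpha)=\sum_{l=0}^{n}\big(\sum_{\beta\in\mathbf{H},\ \mathrm{wt}_{\mathbf{P}}(\beta)=l}\alpha(\beta)\big)x^l$. *)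

theory Defs
  imports "HOL-Algebra.Group" "HOL-Computational_Algebra.Polynomial"
begin

definition character :: "('a, 'b) monoid_scheme \<Rightarrow> ('a \<Rightarrow> complex) \<Rightarrow> bool" where
  "character G \<chi> \<longleftrightarrow>
     (\<forall>x\<in>carrier G. \<forall>y\<in>carrier G. \<chi> (x \<otimes>\<^bsub>G\<^esub> y) = \<chi> x * \<chi> y) \<and>
     (\<forall>x\<in>carrier G. \<chi> x \<noteq> 0)"

definition prod_carrier :: "'i set \<Rightarrow> ('i \<Rightarrow> ('a, 'b) monoid_scheme) \<Rightarrow> ('i \<Rightarrow> 'a) set" where
  "prod_carrier \<Omega> H = (\<Pi>\<^sub>E i\<in>\<Omega>. carrier (H i))"

definition supp_word :: "'i set \<Rightarrow> ('i \<Rightarrow> ('a, 'b) monoid_scheme) \<Rightarrow> ('i \<Rightarrow> 'a) \<Rightarrow> 'i set" where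
  "supp_word \<Omega> H \<beta> = {i\<in>\<Omega>. \<beta> i \<noteq> \<one>\<^bsub>H i\<^esub>}"

definition supp_char :: "'i set \<Rightarrow> ('i \<Rightarrow> ('a, 'b) monoid_scheme) \<Rightarrow> ('i \<Rightarrow> 'a \<Rightarrow> complex) \<Rightarrow> 'i set" where
  "supp_char \<Omega> H \<alpha> = {i\<in>\<Omega>. \<exists>x\<in>carrier (H i). \<alpha> i x \<noteq> 1}"

definition char_eval :: "'i set \<Rightarrow> ('i \<Rightarrow> 'a \<Rightarrow> complex) \<Rightarrow> ('i \<Rightarrow> 'a) \<Rightarrow> complex" where
  "char_eval \<Omega> \<alpha> \<beta> = (\<Prod>i\<in>\<Omega>. \<alpha> i (\<beta> i))"

text \<open>Down-closure of B in the poset (Omega, Q), where (x,y) in Q means x <= y.\<close>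
definition down_closure :: "'i set \<Rightarrow> ('i \<times> 'i) set \<Rightarrow> 'i set \<Rightarrow> 'i set" where
  "down_closure \<Omega> Q B = {j\<in>\<Omega>. \<exists>i\<in>B. (j, i) \<in> Q}"

definition min_elems :: "('i \<times> 'i) set \<Rightarrow> 'i set \<Rightarrow> 'i set" where
  "min_elems Q B = {x\<in>B. \<forall>y\<in>B. (y, x) \<in> Q \<longrightarrow> y = x}"

definition max_elems :: "('i \<times> 'i) set \<Rightarrow> 'i set \<Rightarrow> 'i set" where
  "max_elems Q B = {x\<in>B. \<forall>y\<in>B. (x, y) \<in> Q \<longrightarrow> y = x}"

definition wt :: "'i set \<Rightarrow> ('i \<times> 'i) set \<Rightarrow> ('i \<Rightarrow> ('a, 'b) monoid_scheme) \<Rightarrow> ('i \<Rightarrow> 'a) \<Rightarrow> nat" where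
  "wt \<Omega> Q H \<beta> = card (down_closure \<Omega> Q (supp_word \<Omega> H \<beta>))"

definition F_poly :: "'i set \<Rightarrow> ('i \<times> 'i) set \<Rightarrow> ('i \<Rightarrow> ('a, 'b) monoid_scheme) \<Rightarrow> ('i \<Rightarrow> 'a \<Rightarrow> complex) \<Rightarrow> complex poly" where
  "F_poly \<Omega> P H \<alpha> =
     (\<Sum>l\<in>{0..card \<Omega>}.
        monom (\<Sum>\<beta>\<in>{\<beta>\<in>prod_carrier \<Omega> H. wt \<Omega> P H \<beta> = l}. char_eval \<Omega> \<alpha> \<beta>) l)"

end

theory Submission
  imports Defs
begin

(* Group the codewords beta by their weight ideal I = <supp beta>_P, so that the coefficient of x^k
   in F(alpha) is the sum of the ideal sums over the ideals I of size k.  If some s in supp alpha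
   lies strictly below an element of I, then replacing beta_s by y beta_s, for a y with
   alpha_s(y) <> 1, permutes the codewords with ideal I and multiplies alpha(beta) by alpha_s(y),
   so their sum is 0.  Every element of Omega - X lies strictly above such an s, hence only ideals
   contained in X contribute and the leading term comes from X itself.  The codewords with ideal X
   are those that are trivial outside X and nontrivial on max X, so the ideal sum of X factorises
   into character sums over the H_i: each is |H_i|, except for the i in X that lie in supp alpha,
   namely those of min D, where it is 0. *)

lemma sum_eq_0_if_bij_scales:
  fixes f :: "'a \<Rightarrow> 'b::idom"
  assumes "bij_betw \<phi> A A" and "\<And>a. a \<in> A \<Longrightarrow> f (\<phi> a) = c * f a" and "c \<noteq> 1"
  shows "sum f A = 0"
proof -
  have "sum f A = (\<Sum>a\<in>A. f (\<phi> a))"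
    by (rule sum.reindex_bij_betw[OF assms(1), symmetric])
  also have "\<dots> = c * sum f A"
    using assms(2) by (simp add: sum_distrib_left)
  finally show ?thesis
    using assms(3) by (metis mult_cancel_right2)
qed

lemma (in group) character_one:
  assumes "character G \<chi>"
  shows "\<chi> \<one> = 1"
proof -
  have "\<chi> \<one> = \<chi> \<one> * \<chi> \<one>"
    using assms unfolding character_def by (metis l_one one_closed)
  moreover have "\<chi> \<one> \<noteq> 0"
    using assms unfolding character_def by blast
  ultimately show ?thesis
    by simp
qed

lemma (in group) character_sum:
  assumes "character G \<chi>" and "finite (carrier G)"
  shows "(\<Sum>x\<in>carrier G. \<chi> x) = (if \<forall>x\<in>carrier G. \<chi> x = 1 then card (carrier G) else 0)"
proof (cases "\<forall>x\<in>carrier G. \<chi> x = 1")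
  case False
  then obtain y where y: "y \<in> carrier G" "\<chi> y \<noteq> 1"
    by blast
  have "(\<Sum>x\<in>carrier G. \<chi> x) = 0"
  proof (rule sum_eq_0_if_bij_scales)
    show "bij_betw (\<lambda>x. y \<otimes> x) (carrier G) (carrier G)"
      using y(1) by (simp add: bij_betw_def inj_on_cmult surj_const_mult)
    show "\<chi> (y \<otimes> x) = \<chi> y * \<chi> x" if "x \<in> carrier G" for x
      using assms(1) y(1) that unfolding character_def by blast
  qed (fact y(2))
  then show ?thesis
    using False by auto
qed simp

lemma char_eval_update:
  assumes "finite \<Omega>" and "s \<in> \<Omega>" and "\<alpha> s z = c * \<alpha> s (\<beta> s)"
  shows "char_eval \<Omega> \<alpha> (\<beta>(s := z)) = c * char_eval \<Omega> \<alpha> \<beta>"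
proof -
  have "(\<Prod>i\<in>\<Omega> - {s}. \<alpha> i ((\<beta>(s := z)) i)) = (\<Prod>i\<in>\<Omega> - {s}. \<alpha> i (\<beta> i))"
    by (rule prod.cong) auto
  then show ?thesis
    using assms unfolding char_eval_def by (simp add: prod.remove)
qed

definition down_closed :: "'i set \<Rightarrow> ('i \<times> 'i) set \<Rightarrow> 'i set \<Rightarrow> bool" where
  "down_closed \<Omega> Q I \<longleftrightarrow> I \<subseteq> \<Omega> \<and> (\<forall>a b. b \<in> I \<longrightarrow> (a, b) \<in> Q \<longrightarrow> a \<in> I)"

lemma down_closure_subset: "down_closure \<Omega> Q B \<subseteq> \<Omega>"
  unfolding down_closure_def by auto

lemma supp_word_subset: "supp_word \<Omega> H \<beta> \<subseteq> \<Omega>"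
  unfolding supp_word_def by auto

lemma subset_down_closure: "refl_on \<Omega> Q \<Longrightarrow> B \<subseteq> \<Omega> \<Longrightarrow> B \<subseteq> down_closure \<Omega> Q B"
  unfolding down_closure_def refl_on_def by auto

lemma down_closure_Diff_dominated:
  assumes "trans Q" and "u \<in> B" and "u \<noteq> s" and "(s, u) \<in> Q"
  shows "down_closure \<Omega> Q (B - {s}) = down_closure \<Omega> Q B"
  using assms unfolding down_closure_def trans_def by blast

lemma finite_has_max_elem_above:
  assumes "partial_order_on \<Omega> P" and "finite I" and "I \<subseteq> \<Omega>" and "x \<in> I"
  shows "\<exists>m\<in>max_elems P I. (x, m) \<in> P"
proof -
  define A where "A = {y\<in>I. (x, y) \<in> P}"
  note P = partial_order_onD[OF assms(1)]
  have "finite A"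
    using assms(2) unfolding A_def by simp
  moreover have "x \<in> A"
    using P(1) assms(3,4) unfolding A_def refl_on_def by auto
  moreover have "asymp_on A (\<lambda>a b. (a, b) \<in> P \<and> a \<noteq> b)"
    using P(3) unfolding asymp_on_def antisym_def by blast
  moreover have "transp_on A (\<lambda>a b. (a, b) \<in> P \<and> a \<noteq> b)"
    using P(2,3) unfolding transp_on_def trans_def antisym_def by blast
  ultimately obtain m where m: "m \<in> A" and max: "\<And>y. y \<in> A \<Longrightarrow> (m, y) \<in> P \<Longrightarrow> y = m"
    using Finite_Set.bex_max_element[of A] by blast
  have "y \<in> A" if "y \<in> I" and "(m, y) \<in> P" for y
    using m that P(2) unfolding A_def trans_def by blast
  then have "m \<in> max_elems P I"
    using m max unfolding A_def max_elems_def by blast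
  then show ?thesis
    using m unfolding A_def by blast
qed

lemma down_closure_eq_iff:
  assumes "partial_order_on \<Omega> P" and "finite I" and "down_closed \<Omega> P I" and "B \<subseteq> \<Omega>"
  shows "down_closure \<Omega> P B = I \<longleftrightarrow> B \<subseteq> I \<and> max_elems P I \<subseteq> B"
proof
  assume I: "down_closure \<Omega> P B = I"
  then have "B \<subseteq> I"
    using subset_down_closure[OF partial_order_onD(1)[OF assms(1)] assms(4)] by simp
  moreover have "max_elems P I \<subseteq> B"
    using I \<open>B \<subseteq> I\<close> unfolding down_closure_def max_elems_def by blast
  ultimately show "B \<subseteq> I \<and> max_elems P I \<subseteq> B" ..
next
  assume B: "B \<subseteq> I \<and> max_elems P I \<subseteq> B"
  have "x \<in> down_closure \<Omega> P B" if x: "x \<in> I" for x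
  proof -
    have "I \<subseteq> \<Omega>"
      using assms(3) unfolding down_closed_def by blast
    then obtain m where "m \<in> max_elems P I" and "(x, m) \<in> P"
      using finite_has_max_elem_above[OF assms(1,2)] x by blast
    with B \<open>I \<subseteq> \<Omega>\<close> x show ?thesis
      unfolding down_closure_def by blast
  qed
  moreover have "down_closure \<Omega> P B \<subseteq> I"
    using B assms(3) unfolding down_closure_def down_closed_def by blast
  ultimately show "down_closure \<Omega> P B = I" by blast
qed

locale up_closure_complement =
  fixes \<Omega> :: "'i set" and P :: "('i \<times> 'i) set" and S D X :: "'i set"
  assumes partial_order: "partial_order_on \<Omega> P" and S_subset: "S \<subseteq> \<Omega>"
    and D_eq: "D = down_closure \<Omega> (P\<inverse>) S"
    and X_eq: "X = (\<Omega> - D) \<union> min_elems P D"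
begin

lemmas P_refl = partial_order_onD(1)[OF partial_order]
  and P_trans = partial_order_onD(2)[OF partial_order]
  and P_antisym = partial_order_onD(3)[OF partial_order]
  and P_field = partial_order_onD(4)[OF partial_order]

lemma mem_D_iff: "d \<in> D \<longleftrightarrow> d \<in> \<Omega> \<and> (\<exists>s\<in>S. (s, d) \<in> P)"
  unfolding D_eq down_closure_def by auto

lemma D_upward: "d \<in> D \<Longrightarrow> (d, e) \<in> P \<Longrightarrow> e \<in> D"
  using P_field P_trans unfolding mem_D_iff trans_def by blast

lemma S_subset_D: "S \<subseteq> D"
  using P_refl S_subset unfolding subset_iff mem_D_iff refl_on_def by blast

lemma min_elems_D_subset_S: "min_elems P D \<subseteq> S"
proof
  fix m
  assume m: "m \<in> min_elems P D"
  then obtain s where "s \<in> S" and "(s, m) \<in> P"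
    unfolding min_elems_def mem_D_iff by blast
  with m S_subset_D show "m \<in> S"
    unfolding min_elems_def by blast
qed

lemma X_subset: "X \<subseteq> \<Omega>"
  unfolding X_eq min_elems_def mem_D_iff by blast

lemma down_closed_X: "down_closed \<Omega> P X"
  unfolding down_closed_def
proof (intro conjI allI impI X_subset)
  fix a b
  assume b: "b \<in> X" and ab: "(a, b) \<in> P"
  show "a \<in> X"
  proof (cases "a \<in> D")
    case True
    then have "b \<in> min_elems P D"
      using b ab D_upward unfolding X_eq by blast
    then show ?thesis
      using True ab b unfolding min_elems_def by blast
  next
    case False
    then show ?thesis
      using ab P_field unfolding X_eq by blast
  qed
qed

lemma min_elems_D_subset_max_elems_X: "min_elems P D \<subseteq> max_elems P X"
proof
  fix m
  assume m: "m \<in> min_elems P D"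
  have "z = m" if "z \<in> X" and "(m, z) \<in> P" for z
  proof -
    have "z \<in> min_elems P D"
      using that m D_upward unfolding X_eq min_elems_def by blast
    then show ?thesis
      using m that(2) unfolding min_elems_def by blast
  qed
  moreover have "m \<in> X"
    using m unfolding X_eq by blast
  ultimately show "m \<in> max_elems P X"
    unfolding max_elems_def by blast
qed

lemma S_Int_X: "S \<inter> X = min_elems P D"
  using S_subset_D min_elems_D_subset_S unfolding X_eq by blast

lemma strictly_below_outside_X:
  assumes "j \<in> \<Omega> - X"
  obtains s where "s \<in> S" and "(s, j) \<in> P" and "s \<noteq> j"
proof -
  obtain d where d: "d \<in> D" "(d, j) \<in> P" "d \<noteq> j"
    using assms unfolding X_eq min_elems_def by blast
  then obtain s where s: "s \<in> S" "(s, d) \<in> P"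
    unfolding mem_D_iff by blast
  have "(s, j) \<in> P"
    using s(2) d(2) P_trans unfolding trans_def by blast
  moreover have "s \<noteq> j"
    using s(2) d(2,3) P_antisym unfolding antisym_def by blast
  ultimately show ?thesis
    using s(1) that by blast
qed

lemma card_X:
  assumes "finite \<Omega>"
  shows "card X = card \<Omega> - card D + card (min_elems P D)"
proof -
  have D: "D \<subseteq> \<Omega>"
    unfolding subset_iff mem_D_iff by blast
  then have "finite (min_elems P D)"
    using assms unfolding min_elems_def by (auto intro: rev_finite_subset)
  then have "card X = card (\<Omega> - D) + card (min_elems P D)"
    unfolding X_eq using assms by (intro card_Un_disjoint) (auto simp: min_elems_def)
  then show ?thesis
    using assms D by (simp add: card_Diff_subset finite_subset)
qed

end

definition codewords_of_ideal ::
  "'i set \<Rightarrow> ('i \<times> 'i) set \<Rightarrow> ('i \<Rightarrow> ('a, 'b) monoid_scheme) \<Rightarrow> 'i set \<Rightarrow> ('i \<Rightarrow> 'a) set"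
  where "codewords_of_ideal \<Omega> P H I =
    {\<beta>\<in>prod_carrier \<Omega> H. down_closure \<Omega> P (supp_word \<Omega> H \<beta>) = I}"

definition ideal_sum ::
  "'i set \<Rightarrow> ('i \<times> 'i) set \<Rightarrow> ('i \<Rightarrow> ('a, 'b) monoid_scheme) \<Rightarrow> ('i \<Rightarrow> 'a \<Rightarrow> complex) \<Rightarrow> 'i set \<Rightarrow> complex"
  where "ideal_sum \<Omega> P H \<alpha> I = (\<Sum>\<beta>\<in>codewords_of_ideal \<Omega> P H I. char_eval \<Omega> \<alpha> \<beta>)"

lemma finite_prod_carrier:
  assumes "finite \<Omega>" and "\<And>i. i \<in> \<Omega> \<Longrightarrow> finite (carrier (H i))"
  shows "finite (prod_carrier \<Omega> H)"
  unfolding prod_carrier_def using assms by (rule finite_PiE)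

lemma coeff_F_poly:
  assumes "finite \<Omega>" and "\<And>i. i \<in> \<Omega> \<Longrightarrow> finite (carrier (H i))"
  shows "coeff (F_poly \<Omega> P H \<alpha>) k = (\<Sum>I | I \<subseteq> \<Omega> \<and> card I = k. ideal_sum \<Omega> P H \<alpha> I)"
proof -
  let ?W = "{\<beta>\<in>prod_carrier \<Omega> H. wt \<Omega> P H \<beta> = k}"
  have "wt \<Omega> P H \<beta> \<le> card \<Omega>" for \<beta>
    unfolding wt_def using assms(1) by (intro card_mono down_closure_subset)
  then have W_empty: "?W = {}" if "card \<Omega> < k"
    using that by (auto simp: not_le[symmetric])
  have "coeff (F_poly \<Omega> P H \<alpha>) k = (\<Sum>\<beta>\<in>?W. char_eval \<Omega> \<alpha> \<beta>)"
    unfolding F_poly_def by (auto simp: coeff_sum W_empty)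
  also have "\<dots> = (\<Sum>I | I \<subseteq> \<Omega> \<and> card I = k.
      \<Sum>\<beta> | \<beta> \<in> ?W \<and> down_closure \<Omega> P (supp_word \<Omega> H \<beta>) = I. char_eval \<Omega> \<alpha> \<beta>)"
    using finite_prod_carrier[of \<Omega> H] assms
    by (intro sum.group[symmetric]) (auto simp: wt_def down_closure_def)
  also have "\<dots> = (\<Sum>I | I \<subseteq> \<Omega> \<and> card I = k. ideal_sum \<Omega> P H \<alpha> I)"
    unfolding ideal_sum_def codewords_of_ideal_def wt_def by (intro sum.cong) auto
  finally show ?thesis .
qed

lemma down_closure_supp_word_update:
  assumes "trans P" and "antisym P" and "t \<in> down_closure \<Omega> P (supp_word \<Omega> H \<beta>)"
    and "(s, t) \<in> P" and "s \<noteq> t"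
  shows "down_closure \<Omega> P (supp_word \<Omega> H (\<beta>(s := z))) = down_closure \<Omega> P (supp_word \<Omega> H \<beta>)"
proof -
  obtain u where u: "u \<in> supp_word \<Omega> H \<beta>" "(t, u) \<in> P"
    using assms(3) unfolding down_closure_def by blast
  have su: "(s, u) \<in> P"
    using assms(1,4) u(2) unfolding trans_def by blast
  have "u \<noteq> s"
    using assms(2,4,5) u(2) unfolding antisym_def by blast
  have same: "supp_word \<Omega> H (\<beta>(s := z)) - {s} = supp_word \<Omega> H \<beta> - {s}"
    unfolding supp_word_def by auto
  then have "u \<in> supp_word \<Omega> H (\<beta>(s := z))"
    using u(1) \<open>u \<noteq> s\<close> by blast
  then have "down_closure \<Omega> P (supp_word \<Omega> H (\<beta>(s := z))) =
      down_closure \<Omega> P (supp_word \<Omega> H (\<beta>(s := z)) - {s})"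
    using down_closure_Diff_dominated[OF assms(1) _ \<open>u \<noteq> s\<close> su] by simp
  also have "\<dots> = down_closure \<Omega> P (supp_word \<Omega> H \<beta>)"
    unfolding same using down_closure_Diff_dominated[OF assms(1) u(1) \<open>u \<noteq> s\<close> su] .
  finally show ?thesis .
qed

lemma prod_carrier_fun_upd:
  assumes "\<beta> \<in> prod_carrier \<Omega> H" and "s \<in> \<Omega>" and "z \<in> carrier (H s)"
  shows "\<beta>(s := z) \<in> prod_carrier \<Omega> H"
  using PiE_fun_upd[of z "\<lambda>i. carrier (H i)" s \<beta> \<Omega>] assms
  unfolding prod_carrier_def by (simp add: insert_absorb)

lemma fun_upd_in_codewords_of_ideal:
  assumes "trans P" and "antisym P" and "\<beta> \<in> codewords_of_ideal \<Omega> P H I"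
    and "s \<in> \<Omega>" and "z \<in> carrier (H s)" and "t \<in> I" and "(s, t) \<in> P" and "s \<noteq> t"
  shows "\<beta>(s := z) \<in> codewords_of_ideal \<Omega> P H I"
proof -
  have \<beta>: "\<beta> \<in> prod_carrier \<Omega> H" and I: "down_closure \<Omega> P (supp_word \<Omega> H \<beta>) = I"
    using assms(3) unfolding codewords_of_ideal_def by auto
  then have "t \<in> down_closure \<Omega> P (supp_word \<Omega> H \<beta>)"
    using assms(6) by simp
  then have "down_closure \<Omega> P (supp_word \<Omega> H (\<beta>(s := z))) = I"
    using I by (simp add: down_closure_supp_word_update[OF assms(1,2) _ assms(7,8)])
  then show ?thesis
    using prod_carrier_fun_upd[OF \<beta> assms(4,5)] unfolding codewords_of_ideal_def by blast
qed

lemma ideal_sum_eq_0: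
  assumes "finite \<Omega>" and "\<And>i. i \<in> \<Omega> \<Longrightarrow> group (H i)"
    and "\<And>i. i \<in> \<Omega> \<Longrightarrow> character (H i) (\<alpha> i)" and "trans P" and "antisym P"
    and "s \<in> supp_char \<Omega> H \<alpha>" and "t \<in> I" and "(s, t) \<in> P" and "s \<noteq> t"
  shows "ideal_sum \<Omega> P H \<alpha> I = 0"
proof -
  let ?A = "codewords_of_ideal \<Omega> P H I"
  have s: "s \<in> \<Omega>"
    using assms(6) unfolding supp_char_def by blast
  interpret G: group "H s"
    using assms(2)[OF s] .
  obtain y where y: "y \<in> carrier (H s)" "\<alpha> s y \<noteq> 1"
    using assms(6) unfolding supp_char_def by blast
  have carrier_s: "\<beta> s \<in> carrier (H s)" if "\<beta> \<in> ?A" for \<beta>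
    using that s unfolding codewords_of_ideal_def prod_carrier_def by blast
  note update = fun_upd_in_codewords_of_ideal[where H = H, OF assms(4,5) _ s _ assms(7-9)]
  define \<phi> where "\<phi> \<beta> = \<beta>(s := y \<otimes>\<^bsub>H s\<^esub> \<beta> s)" for \<beta>
  define \<psi> where "\<psi> \<beta> = \<beta>(s := inv\<^bsub>H s\<^esub> y \<otimes>\<^bsub>H s\<^esub> \<beta> s)" for \<beta>
  have bij: "bij_betw \<phi> ?A ?A"
  proof (rule bij_betw_byWitness[where f' = \<psi>])
    show "\<forall>\<beta>\<in>?A. \<psi> (\<phi> \<beta>) = \<beta>" and "\<forall>\<beta>\<in>?A. \<phi> (\<psi> \<beta>) = \<beta>"
      using y(1) carrier_s unfolding \<phi>_def \<psi>_def by (simp_all add: G.m_assoc[symmetric])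
    show "\<phi> ` ?A \<subseteq> ?A" and "\<psi> ` ?A \<subseteq> ?A"
      using y(1) carrier_s update unfolding \<phi>_def \<psi>_def by auto
  qed
  have scale: "char_eval \<Omega> \<alpha> (\<phi> \<beta>) = \<alpha> s y * char_eval \<Omega> \<alpha> \<beta>" if "\<beta> \<in> ?A" for \<beta>
    unfolding \<phi>_def using assms(1) s
  proof (rule char_eval_update)
    show "\<alpha> s (y \<otimes>\<^bsub>H s\<^esub> \<beta> s) = \<alpha> s y * \<alpha> s (\<beta> s)"
      using assms(3)[OF s] y(1) carrier_s[OF that] unfolding character_def by blast
  qed
  show ?thesis
    unfolding ideal_sum_def by (rule sum_eq_0_if_bij_scales[OF bij _ y(2)]) (rule scale)
qed

lemma codewords_of_down_closed_eq_PiE: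
  assumes "partial_order_on \<Omega> P" and "finite I" and "down_closed \<Omega> P I"
    and "\<And>i. i \<in> \<Omega> \<Longrightarrow> \<one>\<^bsub>H i\<^esub> \<in> carrier (H i)"
  shows "codewords_of_ideal \<Omega> P H I =
    (\<Pi>\<^sub>E i\<in>\<Omega>. if i \<notin> I then {\<one>\<^bsub>H i\<^esub>}
      else if i \<in> max_elems P I then carrier (H i) - {\<one>\<^bsub>H i\<^esub>} else carrier (H i))"
proof -
  have I: "max_elems P I \<subseteq> I" "I \<subseteq> \<Omega>"
    using assms(3) unfolding max_elems_def down_closed_def by auto
  have "down_closure \<Omega> P (supp_word \<Omega> H \<beta>) = I \<longleftrightarrow>
      (\<forall>i\<in>\<Omega>. (i \<notin> I \<longrightarrow> \<beta> i = \<one>\<^bsub>H i\<^esub>) \<and> (i \<in> max_elems P I \<longrightarrow> \<beta> i \<noteq> \<one>\<^bsub>H i\<^esub>))" for \<beta>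
    using down_closure_eq_iff[OF assms(1-3) supp_word_subset, of H \<beta>] I
    unfolding supp_word_def by blast
  moreover have "x \<in> (if i \<notin> I then {\<one>\<^bsub>H i\<^esub>}
      else if i \<in> max_elems P I then carrier (H i) - {\<one>\<^bsub>H i\<^esub>} else carrier (H i)) \<longleftrightarrow>
    x \<in> carrier (H i) \<and> (i \<notin> I \<longrightarrow> x = \<one>\<^bsub>H i\<^esub>) \<and> (i \<in> max_elems P I \<longrightarrow> x \<noteq> \<one>\<^bsub>H i\<^esub>)"
    if "i \<in> \<Omega>" for i x
    using assms(4)[OF that] I(1) by auto
  ultimately show ?thesis
    unfolding codewords_of_ideal_def prod_carrier_def by (auto simp: PiE_iff extensional_def)
qed

lemma ideal_sum_down_closed:
  assumes "finite \<Omega>" and "\<And>i. i \<in> \<Omega> \<Longrightarrow> group (H i)"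
    and "\<And>i. i \<in> \<Omega> \<Longrightarrow> finite (carrier (H i))"
    and "\<And>i. i \<in> \<Omega> \<Longrightarrow> character (H i) (\<alpha> i)"
    and "partial_order_on \<Omega> P" and "down_closed \<Omega> P I"
  shows "ideal_sum \<Omega> P H \<alpha> I =
    (\<Prod>i\<in>I - max_elems P I. \<Sum>x\<in>carrier (H i). \<alpha> i x) *
    (\<Prod>i\<in>max_elems P I. (\<Sum>x\<in>carrier (H i). \<alpha> i x) - 1)"
proof -
  define C where "C i = (if i \<notin> I then {\<one>\<^bsub>H i\<^esub>}
    else if i \<in> max_elems P I then carrier (H i) - {\<one>\<^bsub>H i\<^esub>} else carrier (H i))" for i
  let ?M = "max_elems P I"
  have one: "\<one>\<^bsub>H i\<^esub> \<in> carrier (H i)" and \<alpha>_one: "\<alpha> i \<one>\<^bsub>H i\<^esub> = 1" if "i \<in> \<Omega>" for i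
    using assms(2,4)[OF that] by (simp_all add: group.character_one monoid.one_closed group.is_monoid)
  have M: "?M \<subseteq> I" and I: "I \<subseteq> \<Omega>"
    using assms(6) unfolding max_elems_def down_closed_def by auto
  have "codewords_of_ideal \<Omega> P H I = Pi\<^sub>E \<Omega> C"
    unfolding C_def using assms(5) finite_subset[OF I assms(1)] assms(6) one
    by (rule codewords_of_down_closed_eq_PiE)
  then have "ideal_sum \<Omega> P H \<alpha> I = (\<Sum>\<beta>\<in>Pi\<^sub>E \<Omega> C. \<Prod>i\<in>\<Omega>. \<alpha> i (\<beta> i))"
    unfolding ideal_sum_def char_eval_def by simp
  also have "\<dots> = (\<Prod>i\<in>\<Omega>. \<Sum>x\<in>C i. \<alpha> i x)"
    using assms(1,3) by (intro prod_sum_PiE[symmetric]) (auto simp: C_def)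
  also have "\<dots> = (\<Prod>i\<in>\<Omega> - I. \<Sum>x\<in>C i. \<alpha> i x) *
      ((\<Prod>i\<in>I - ?M. \<Sum>x\<in>C i. \<alpha> i x) * (\<Prod>i\<in>?M. \<Sum>x\<in>C i. \<alpha> i x))"
    by (simp only: prod.subset_diff[OF I assms(1)] prod.subset_diff[OF M finite_subset[OF I assms(1)]])
  also have "(\<Prod>i\<in>\<Omega> - I. \<Sum>x\<in>C i. \<alpha> i x) = 1"
    using \<alpha>_one by (simp add: C_def)
  also have "(\<Prod>i\<in>I - ?M. \<Sum>x\<in>C i. \<alpha> i x) = (\<Prod>i\<in>I - ?M. \<Sum>x\<in>carrier (H i). \<alpha> i x)"
    by (intro prod.cong refl) (simp add: C_def)
  also have "(\<Prod>i\<in>?M. \<Sum>x\<in>C i. \<alpha> i x) = (\<Prod>i\<in>?M. (\<Sum>x\<in>carrier (H i). \<alpha> i x) - 1)"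
    using M I one \<alpha>_one assms(3) by (intro prod.cong refl) (auto simp: C_def sum_diff1)
  finally show ?thesis
    by simp
qed

lemma degree_lead_coeff_F_poly:
  assumes "finite \<Omega>" and "\<And>i. i \<in> \<Omega> \<Longrightarrow> finite (carrier (H i))" and "X \<subseteq> \<Omega>"
    and "\<And>I. I \<subseteq> \<Omega> \<Longrightarrow> ideal_sum \<Omega> P H \<alpha> I \<noteq> 0 \<Longrightarrow> I \<subseteq> X"
    and "ideal_sum \<Omega> P H \<alpha> X \<noteq> 0"
  shows "degree (F_poly \<Omega> P H \<alpha>) = card X \<and> lead_coeff (F_poly \<Omega> P H \<alpha>) = ideal_sum \<Omega> P H \<alpha> X"
proof -
  have coeff: "coeff (F_poly \<Omega> P H \<alpha>) k = (if k = card X then ideal_sum \<Omega> P H \<alpha> X else 0)"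
    if "card X \<le> k" for k
  proof -
    let ?T = "{I. I \<subseteq> \<Omega> \<and> card I = k}"
    have "finite ?T"
      using assms(1) by (simp add: finite_subset[of _ "Pow \<Omega>"])
    have "ideal_sum \<Omega> P H \<alpha> I = (if I = X then ideal_sum \<Omega> P H \<alpha> X else 0)" if "I \<in> ?T" for I
    proof (cases "ideal_sum \<Omega> P H \<alpha> I = 0")
      case False
      then have "I \<subseteq> X"
        using assms(4) that by blast
      moreover have "finite X"
        using assms(1,3) by (rule finite_subset[rotated])
      ultimately have "I = X"
        using that \<open>card X \<le> k\<close> by (intro card_seteq) auto
      then show ?thesis
        by simp
    qed auto
    then have "(\<Sum>I\<in>?T. ideal_sum \<Omega> P H \<alpha> I) = (\<Sum>I\<in>?T. if I = X then ideal_sum \<Omega> P H \<alpha> X else 0)"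
      by (rule sum.cong[OF refl])
    then show ?thesis
      using coeff_F_poly[OF assms(1,2)] \<open>finite ?T\<close> assms(3) by auto
  qed
  have "degree (F_poly \<Omega> P H \<alpha>) = card X"
  proof (rule antisym)
    show "degree (F_poly \<Omega> P H \<alpha>) \<le> card X"
      using coeff by (intro degree_le) auto
    show "card X \<le> degree (F_poly \<Omega> P H \<alpha>)"
      using coeff[of "card X"] assms(5) by (intro le_degree) simp
  qed
  then show ?thesis
    using coeff[of "card X"] by simp
qed

locale character_up_closure = up_closure_complement \<Omega> P "supp_char \<Omega> H \<alpha>" D X
  for \<Omega> :: "'i set" and P :: "('i \<times> 'i) set" and H :: "'i \<Rightarrow> ('a, 'b) monoid_scheme"
    and \<alpha> :: "'i \<Rightarrow> 'a \<Rightarrow> complex" and D X +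
  assumes finite_\<Omega>: "finite \<Omega>"
    and group: "\<And>i. i \<in> \<Omega> \<Longrightarrow> group (H i)"
    and finite_carrier: "\<And>i. i \<in> \<Omega> \<Longrightarrow> finite (carrier (H i))"
    and character: "\<And>i. i \<in> \<Omega> \<Longrightarrow> character (H i) (\<alpha> i)"
begin

lemma subset_X_if_ideal_sum_neq_0:
  assumes "I \<subseteq> \<Omega>" and "ideal_sum \<Omega> P H \<alpha> I \<noteq> 0"
  shows "I \<subseteq> X"
proof
  fix j
  assume "j \<in> I"
  show "j \<in> X"
  proof (rule ccontr)
    assume "j \<notin> X"
    then obtain s where "s \<in> supp_char \<Omega> H \<alpha>" and "(s, j) \<in> P" and "s \<noteq> j"
      using strictly_below_outside_X \<open>j \<in> I\<close> assms(1) by blast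
    then have "ideal_sum \<Omega> P H \<alpha> I = 0"
      using ideal_sum_eq_0[of \<Omega> H \<alpha> P, OF finite_\<Omega> group character P_trans P_antisym] \<open>j \<in> I\<close> by blast
    with assms(2) show False ..
  qed
qed

lemma character_sum_on_X:
  assumes "i \<in> X"
  shows "(\<Sum>x\<in>carrier (H i). \<alpha> i x) =
    (if i \<in> min_elems P D then 0 else of_nat (card (carrier (H i))))"
proof -
  have "i \<in> \<Omega>"
    using assms X_subset by blast
  then have "i \<in> min_elems P D \<longleftrightarrow> \<not> (\<forall>x\<in>carrier (H i). \<alpha> i x = 1)"
    using assms S_Int_X[symmetric] unfolding supp_char_def by blast
  then show ?thesis
    using group.character_sum[OF group character finite_carrier, OF \<open>i \<in> \<Omega>\<close> \<open>i \<in> \<Omega>\<close> \<open>i \<in> \<Omega>\<close>]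
    by simp
qed

lemma ideal_sum_X:
  "ideal_sum \<Omega> P H \<alpha> X = of_int ((-1) ^ card (min_elems P D)
    * (\<Prod>i\<in>X - max_elems P X. int (card (carrier (H i))))
    * (\<Prod>i\<in>max_elems P X - min_elems P D. int (card (carrier (H i))) - 1))"
proof -
  let ?mD = "min_elems P D" and ?mX = "max_elems P X"
  have fin: "finite ?mX"
    using finite_\<Omega> X_subset unfolding max_elems_def by (auto intro: finite_subset)
  have "ideal_sum \<Omega> P H \<alpha> X =
      (\<Prod>i\<in>X - ?mX. \<Sum>x\<in>carrier (H i). \<alpha> i x) * (\<Prod>i\<in>?mX. (\<Sum>x\<in>carrier (H i). \<alpha> i x) - 1)"
    by (rule ideal_sum_down_closed[of \<Omega> H \<alpha>, OF finite_\<Omega> group finite_carrier character partial_order down_closed_X])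
  also have "(\<Prod>i\<in>X - ?mX. \<Sum>x\<in>carrier (H i). \<alpha> i x) = (\<Prod>i\<in>X - ?mX. of_nat (card (carrier (H i))))"
    using character_sum_on_X min_elems_D_subset_max_elems_X by (intro prod.cong refl) auto
  also have "(\<Prod>i\<in>?mX. (\<Sum>x\<in>carrier (H i). \<alpha> i x) - 1) =
      (\<Prod>i\<in>?mX - ?mD. (\<Sum>x\<in>carrier (H i). \<alpha> i x) - 1) * (\<Prod>i\<in>?mD. (\<Sum>x\<in>carrier (H i). \<alpha> i x) - 1)"
    by (rule prod.subset_diff[OF min_elems_D_subset_max_elems_X fin])
  also have "(\<Prod>i\<in>?mX - ?mD. (\<Sum>x\<in>carrier (H i). \<alpha> i x) - 1) = (\<Prod>i\<in>?mX - ?mD. of_nat (card (carrier (H i))) - 1)"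
    using character_sum_on_X unfolding max_elems_def by (intro prod.cong refl) auto
  also have "(\<Prod>i\<in>?mD. (\<Sum>x\<in>carrier (H i). \<alpha> i x) - 1) = (-1) ^ card ?mD"
    using character_sum_on_X min_elems_D_subset_max_elems_X unfolding max_elems_def
    by (simp add: subset_iff)
  finally show ?thesis
    by (simp add: of_int_prod mult_ac)
qed

lemma ideal_sum_X_neq_0:
  assumes "\<And>i. i \<in> \<Omega> \<Longrightarrow> 2 \<le> card (carrier (H i))"
  shows "ideal_sum \<Omega> P H \<alpha> X \<noteq> 0"
proof -
  have "finite X"
    using finite_\<Omega> X_subset by (rule finite_subset[rotated])
  moreover have "max_elems P X \<subseteq> X"
    unfolding max_elems_def by blast
  ultimately have "finite (max_elems P X)"
    by (rule finite_subset[rotated])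
  have "int (card (carrier (H i))) \<noteq> 0" and "int (card (carrier (H i))) - 1 \<noteq> 0" if "i \<in> X" for i
    using assms X_subset that by force+
  then show ?thesis
    unfolding ideal_sum_X using \<open>finite X\<close> \<open>finite (max_elems P X)\<close> \<open>max_elems P X \<subseteq> X\<close>
    by (auto simp: prod_zero_iff)
qed

end

theorem proposition2p2:
  fixes \<Omega> :: "'i set" and H :: "'i \<Rightarrow> ('a, 'b) monoid_scheme"
    and P :: "('i \<times> 'i) set" and \<alpha> :: "'i \<Rightarrow> 'a \<Rightarrow> complex"
    and D X :: "'i set"
  assumes "finite \<Omega>"
    and "\<And>i. i \<in> \<Omega> \<Longrightarrow> comm_group (H i)"
    and "\<And>i. i \<in> \<Omega> \<Longrightarrow> finite (carrier (H i))"
    and "\<And>i. i \<in> \<Omega> \<Longrightarrow> card (carrier (H i)) \<ge> 2"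
    and "partial_order_on \<Omega> P"
    and "\<And>i. i \<in> \<Omega> \<Longrightarrow> character (H i) (\<alpha> i)"
    and "D = down_closure \<Omega> (P\<inverse>) (supp_char \<Omega> H \<alpha>)"
    and "X = (\<Omega> - D) \<union> min_elems P D"
  shows "degree (F_poly \<Omega> P H \<alpha>) = card X
    \<and> card X = card \<Omega> - card D + card (min_elems P D)
    \<and> lead_coeff (F_poly \<Omega> P H \<alpha>) =
        of_int ((-1) ^ card (min_elems P D)
          * (\<Prod>i\<in>X - max_elems P X. int (card (carrier (H i))))
          * (\<Prod>i\<in>max_elems P X - min_elems P D. int (card (carrier (H i))) - 1))"
proof -
  interpret character_up_closure \<Omega> P H \<alpha> D X
  proof (intro character_up_closure.intro character_up_closure_axioms.intro up_closure_complement.intro)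
    show "supp_char \<Omega> H \<alpha> \<subseteq> \<Omega>"
      unfolding supp_char_def by blast
    show "group (H i)" if "i \<in> \<Omega>" for i
      using assms(2)[OF that] by (rule comm_group.axioms(2))
  qed (fact assms)+
  have "degree (F_poly \<Omega> P H \<alpha>) = card X \<and> lead_coeff (F_poly \<Omega> P H \<alpha>) = ideal_sum \<Omega> P H \<alpha> X"
    using finite_\<Omega> finite_carrier X_subset subset_X_if_ideal_sum_neq_0 ideal_sum_X_neq_0[OF assms(4)]
    by (rule degree_lead_coeff_F_poly)
  then show ?thesis
    using card_X[OF finite_\<Omega>] unfolding ideal_sum_X by blast
qed

end
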